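(* Let $n>3$ and let $A=[A_1,\ldots,A_n]$ be an $n\times n\times n$ ASHM in which every line contains at most one entry equal to $-1$ (a near-permutation hypermatrix). Then $L(A)=1A_1+\cdots+nA_n$ has no constant row and no constant column.
   Context: An $n\times n$ alternating sign matrix (ASM) is an $n\times n$ matrix with entries in $\{0,1,-1\}$ such that in every row and column the nonzeros alternate in sign, beginning and ending with $+1$. An $n\times n\times n$ hypermatrix $A=[a_{ijk}]$ is written $A=[A_1,\ldots,A_n]$ with $A_k=[a_{ijk}]_{i,j}$; lines are obtained by fixing two of the three indices. $A$ is an ASHM if all entries lie in $\{0,\pm1\}$ and in every line the nonzeros alternate in sign beginning and ending with $+1$. A line of a matrix is constant if all its entries are equal. *)

theory Defs
  imports Main
begin

text \<open>Hypermatrices are functions nat => nat => nat => int, indexed by 1..n in each coordinate.\<close>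

definition alt_line :: "int list \<Rightarrow> bool" where
  "alt_line xs \<longleftrightarrow> (let ys = filter (\<lambda>x. x \<noteq> 0) xs in
     ys \<noteq> [] \<and> odd (length ys) \<and> (\<forall>i<length ys. ys ! i = (if even i then 1 else -1)))"

definition is_ASHM :: "nat \<Rightarrow> (nat \<Rightarrow> nat \<Rightarrow> nat \<Rightarrow> int) \<Rightarrow> bool" where
  "is_ASHM n a \<longleftrightarrow>
     (\<forall>i\<in>{1..n}. \<forall>j\<in>{1..n}. \<forall>k\<in>{1..n}. a i j k \<in> {0, 1, -1}) \<and>
     (\<forall>j\<in>{1..n}. \<forall>k\<in>{1..n}. alt_line (map (\<lambda>i. a i j k) [1..<n+1])) \<and>
     (\<forall>i\<in>{1..n}. \<forall>k\<in>{1..n}. alt_line (map (\<lambda>j. a i j k) [1..<n+1])) \<and>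
     (\<forall>i\<in>{1..n}. \<forall>j\<in>{1..n}. alt_line (map (\<lambda>k. a i j k) [1..<n+1]))"

definition near_perm :: "nat \<Rightarrow> (nat \<Rightarrow> nat \<Rightarrow> nat \<Rightarrow> int) \<Rightarrow> bool" where
  "near_perm n a \<longleftrightarrow>
     (\<forall>j\<in>{1..n}. \<forall>k\<in>{1..n}. card {i\<in>{1..n}. a i j k = -1} \<le> 1) \<and>
     (\<forall>i\<in>{1..n}. \<forall>k\<in>{1..n}. card {j\<in>{1..n}. a i j k = -1} \<le> 1) \<and>
     (\<forall>i\<in>{1..n}. \<forall>j\<in>{1..n}. card {k\<in>{1..n}. a i j k = -1} \<le> 1)"

definition Lmat :: "nat \<Rightarrow> (nat \<Rightarrow> nat \<Rightarrow> nat \<Rightarrow> int) \<Rightarrow> nat \<Rightarrow> nat \<Rightarrow> int" where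
  "Lmat n a i j = (\<Sum>k=1..n. int k * a i j k)"

definition const_row :: "nat \<Rightarrow> (nat \<Rightarrow> nat \<Rightarrow> int) \<Rightarrow> nat \<Rightarrow> bool" where
  "const_row n M i \<longleftrightarrow> (\<forall>j\<in>{1..n}. \<forall>j'\<in>{1..n}. M i j = M i j')"

definition const_col :: "nat \<Rightarrow> (nat \<Rightarrow> nat \<Rightarrow> int) \<Rightarrow> nat \<Rightarrow> bool" where
  "const_col n M j \<longleftrightarrow> (\<forall>i\<in>{1..n}. \<forall>i'\<in>{1..n}. M i j = M i' j)"

end

theory Submission
  imports Defs
begin

text \<open>Fix one slice \<open>M\<close> of \<open>A\<close> (a row index or a column index of \<open>L(A)\<close>); it is an
  alternating sign matrix whose columns contain at most one \<open>-1\<close>, and the line of \<open>L(A)\<close>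
  consists of the weighted row sums \<open>w(j) = \<Sum>k. k M\<^sub>j\<^sub>k\<close>. Partial column sums of an ASM
  lie in \<open>{0,1}\<close>, so the first row is a unit vector \<open>e\<^sub>p\<close> with \<open>w(1) = p\<close>, and the second
  row has entries in \<open>{0,1}\<close> outside column \<open>p\<close>. If \<open>w(2) = w(1)\<close>, the second row can
  therefore not be a unit vector, which forces \<open>M\<^sub>2\<^sub>p = -1\<close>. The same reasoning on the last
  two rows gives \<open>M\<^bsub>n-1,p\<^esub> = -1\<close>, and for \<open>n > 3\<close> this puts two \<open>-1\<close>s into column \<open>p\<close>.\<close>

lemma sum_list_filter_nonzero:
  "sum_list (filter (\<lambda>x. x \<noteq> 0) xs) = sum_list (xs :: 'a::monoid_add list)"
  by (induction xs) auto

lemma sum_list_take_alternating: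
  assumes "\<forall>i<length ys. ys ! i = (if even i then (1::int) else -1)" and "u \<le> length ys"
  shows "sum_list (take u ys) = (if even u then 0 else 1)"
  using assms(2)
proof (induction u)
  case 0
  then show ?case by simp
next
  case (Suc u)
  then have "take (Suc u) ys = take u ys @ [ys ! u]"
    by (simp add: take_Suc_conv_app_nth)
  with Suc assms(1) show ?case by auto
qed

lemma alt_line_sum_list_take:
  assumes "alt_line xs"
  shows "sum_list (take t xs) \<in> {0, 1}"
proof -
  define P where "P = (\<lambda>x::int. x \<noteq> 0)"
  define ys where "ys = filter P xs"
  have alternating: "\<forall>i<length ys. ys ! i = (if even i then (1::int) else -1)"
    using assms unfolding alt_line_def ys_def P_def Let_def by auto
  have ys_split: "ys = filter P (take t xs) @ filter P (drop t xs)"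
    unfolding ys_def by (metis append_take_drop_id filter_append)
  define u where "u = length (filter P (take t xs))"
  have "filter P (take t xs) = take u ys" and "u \<le> length ys"
    unfolding u_def by (subst ys_split; simp)+
  then have "sum_list (take t xs) = sum_list (take u ys)"
    using sum_list_filter_nonzero[of "take t xs"] by (simp add: P_def)
  then show ?thesis
    using sum_list_take_alternating[OF alternating \<open>u \<le> length ys\<close>] by auto
qed

lemma alt_line_sum_list:
  assumes "alt_line xs"
  shows "sum_list xs = 1"
proof -
  define ys where "ys = filter (\<lambda>x. x \<noteq> 0) xs"
  have "\<forall>i<length ys. ys ! i = (if even i then (1::int) else -1)" and "odd (length ys)"
    using assms unfolding alt_line_def ys_def Let_def by auto
  then have "sum_list (take (length ys) ys) = 1"
    using sum_list_take_alternating[of ys "length ys"] by simp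
  then show ?thesis
    by (simp add: ys_def sum_list_filter_nonzero)
qed

lemma sum_list_map_upt_Suc:
  "sum_list (map f [1..<t+1]) = (\<Sum>k=1..t. f k :: 'a::comm_monoid_add)"
  by (metis atLeastLessThanSuc_atLeastAtMost Suc_eq_plus1 sum_set_upt_conv_sum_list_nat set_upt)

lemma alt_line_total_sum:
  assumes "alt_line (map f [1..<n+1])"
  shows "(\<Sum>k=1..n. f k :: int) = 1"
  by (metis alt_line_sum_list assms sum_list_map_upt_Suc)

lemma alt_line_initial_sum:
  assumes "alt_line (map f [1..<n+1])" and "t \<le> n"
  shows "(\<Sum>k=1..t. f k :: int) \<in> {0, 1}"
proof -
  have "take t [1..<n+1] = [1..<1+t]"
    using assms(2) by (intro take_upt) simp
  then have "take t (map f [1..<n+1]) = map f [1..<t+1]"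
    by (metis take_map add.commute)
  then show ?thesis
    by (metis alt_line_sum_list_take assms(1) sum_list_map_upt_Suc)
qed

lemma alt_line_final_sum:
  assumes "alt_line (map f [1..<n+1])" and "t \<le> n"
  shows "(\<Sum>k\<in>{t<..n}. f k :: int) \<in> {0, 1}"
proof -
  have "{1..n} = {1..t} \<union> {t<..n}"
    using assms(2) by auto
  then have "(\<Sum>k=1..n. f k) = (\<Sum>k=1..t. f k) + (\<Sum>k\<in>{t<..n}. f k)"
    by (simp add: sum.union_disjoint ivl_disj_int_two(8))
  then show ?thesis
    using alt_line_total_sum[OF assms(1)] alt_line_initial_sum[OF assms] by auto
qed

lemma weighted_sum_unit_vector:
  assumes "\<forall>k\<in>{1..n}. g k \<in> {0, 1::int}" and "(\<Sum>k=1..n. g k) = 1"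
  obtains p where "p \<in> {1..n}" "g p = 1" "\<forall>k\<in>{1..n}. k \<noteq> p \<longrightarrow> g k = 0"
    "(\<Sum>k=1..n. int k * g k) = int p"
proof -
  obtain p where p: "p \<in> {1..n}" "g p \<noteq> 0"
    using assms(2) by (metis one_neq_zero sum.neutral)
  then have "g p = 1"
    using assms(1) by auto
  then have "(\<Sum>k\<in>{1..n}-{p}. g k) = 0"
    using assms(2) p(1) by (simp add: sum.remove)
  moreover have "\<forall>k\<in>{1..n}-{p}. g k \<ge> 0"
    using assms(1) by auto
  ultimately have others: "\<forall>k\<in>{1..n}. k \<noteq> p \<longrightarrow> g k = 0"
    using sum_nonneg_eq_0_iff[of "{1..n}-{p}" g] by auto
  then have "(\<Sum>k=1..n. int k * g k) = int p * g p"
    using p(1) by (simp add: sum.remove)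
  with that p(1) \<open>g p = 1\<close> others show thesis
    by simp
qed

text \<open>Here \<open>x\<close> and \<open>y\<close> are two consecutive rows of an ASM, \<open>x\<close> the outermost one.\<close>

lemma equal_weighted_sums_force_neg_entry:
  assumes x01: "\<forall>k\<in>{1..n}. x k \<in> {0, 1::int}"
    and xy01: "\<forall>k\<in>{1..n}. x k + y k \<in> {0, 1}"
    and "(\<Sum>k=1..n. x k) = 1" and y_sum: "(\<Sum>k=1..n. y k) = 1"
    and weighted: "(\<Sum>k=1..n. int k * x k) = (\<Sum>k=1..n. int k * y k)"
  obtains p where "p \<in> {1..n}" "y p = -1" "(\<Sum>k=1..n. int k * x k) = int p"
proof -
  obtain p where p: "p \<in> {1..n}" "x p = 1" "\<forall>k\<in>{1..n}. k \<noteq> p \<longrightarrow> x k = 0"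
    "(\<Sum>k=1..n. int k * x k) = int p"
    using weighted_sum_unit_vector[OF x01 \<open>(\<Sum>k=1..n. x k) = 1\<close>] by blast
  have "y p \<noteq> 0"
  proof
    assume "y p = 0"
    with p(3) xy01 have "\<forall>k\<in>{1..n}. y k \<in> {0, 1}"
      by (metis add_0 insertI1)
    then obtain q where "y q = 1" "(\<Sum>k=1..n. int k * y k) = int q"
      using weighted_sum_unit_vector y_sum by metis
    with weighted p(4) \<open>y p = 0\<close> show False
      by simp
  qed
  moreover have "y p \<in> {-1, 0}"
    using xy01 p(1,2) by force
  ultimately show thesis
    using that p(1,4) by auto
qed

lemma asm_weighted_row_sums_not_constant:
  fixes M :: "nat \<Rightarrow> nat \<Rightarrow> int"
  assumes "n > 3"
    and rows: "\<forall>j\<in>{1..n}. alt_line (map (\<lambda>k. M j k) [1..<n+1])"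
    and cols: "\<forall>k\<in>{1..n}. alt_line (map (\<lambda>j. M j k) [1..<n+1])"
    and one_neg: "\<forall>k\<in>{1..n}. card {j\<in>{1..n}. M j k = -1} \<le> 1"
    and const: "\<forall>j\<in>{1..n}. \<forall>j'\<in>{1..n}. (\<Sum>k=1..n. int k * M j k) = (\<Sum>k=1..n. int k * M j' k)"
  shows False
proof -
  have in_range: "1 \<in> {1..n}" "2 \<in> {1..n}" "n - 1 \<in> {1..n}" "n \<in> {1..n}"
    using \<open>n > 3\<close> by auto
  have row_sum: "(\<Sum>k=1..n. M j k) = 1" if "j \<in> {1..n}" for j
    using rows that alt_line_total_sum by blast
  have "\<forall>k\<in>{1..n}. M 1 k \<in> {0, 1}" and "\<forall>k\<in>{1..n}. M 1 k + M 2 k \<in> {0, 1}"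
    using alt_line_initial_sum[of "\<lambda>j. M j k" n 1 for k] alt_line_initial_sum[of "\<lambda>j. M j k" n 2 for k]
      cols \<open>n > 3\<close> by (simp_all add: numeral_2_eq_2)
  from equal_weighted_sums_force_neg_entry[OF this row_sum[OF in_range(1)] row_sum[OF in_range(2)]]
  obtain p where p: "p \<in> {1..n}" "M 2 p = -1" "(\<Sum>k=1..n. int k * M 1 k) = int p"
    using const in_range(1,2) by blast
  have "{n-1<..n} = {n}" and "{n-2<..n} = {n-1, n}"
    using \<open>n > 3\<close> by auto
  then have "\<forall>k\<in>{1..n}. M n k \<in> {0, 1}" and "\<forall>k\<in>{1..n}. M n k + M (n-1) k \<in> {0, 1}"
    using alt_line_final_sum[of "\<lambda>j. M j k" n "n-1" for k]
      alt_line_final_sum[of "\<lambda>j. M j k" n "n-2" for k] cols \<open>n > 3\<close> by (simp_all add: add.commute)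
  from equal_weighted_sums_force_neg_entry[OF this row_sum[OF in_range(4)] row_sum[OF in_range(3)]]
  obtain p' where p': "M (n-1) p' = -1" "(\<Sum>k=1..n. int k * M n k) = int p'"
    using const in_range(3,4) by blast
  have "p' = p"
    using p(3) p'(2) const in_range(1,4) by (metis of_nat_eq_iff)
  then have "{2, n-1} \<subseteq> {j\<in>{1..n}. M j p = -1}"
    using p p' \<open>n > 3\<close> by auto
  moreover have "card {2::nat, n-1} = 2"
    using \<open>n > 3\<close> by simp
  ultimately have "card {j\<in>{1..n}. M j p = -1} \<ge> 2"
    using card_mono[of "{j\<in>{1..n}. M j p = -1}" "{2, n-1}"] by simp
  moreover have "card {j\<in>{1..n}. M j p = -1} \<le> 1"
    using one_neg p(1) by blast
  ultimately show False
    by linarith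
qed

theorem mainTheorem6:
  fixes n :: nat and a :: "nat \<Rightarrow> nat \<Rightarrow> nat \<Rightarrow> int"
  assumes "n > 3" and "is_ASHM n a" and "near_perm n a"
  shows "(\<forall>i\<in>{1..n}. \<not> const_row n (Lmat n a) i) \<and>
         (\<forall>j\<in>{1..n}. \<not> const_col n (Lmat n a) j)"
proof (intro conjI ballI notI)
  fix i assume "i \<in> {1..n}" and "const_row n (Lmat n a) i"
  then show False
    using asm_weighted_row_sums_not_constant[of n "\<lambda>j k. a i j k"] assms
    unfolding is_ASHM_def near_perm_def const_row_def Lmat_def by blast
next
  fix j assume "j \<in> {1..n}" and "const_col n (Lmat n a) j"
  then show False
    using asm_weighted_row_sums_not_constant[of n "\<lambda>i k. a i j k"] assms
    unfolding is_ASHM_def near_perm_def const_col_def Lmat_def by blast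
qed

end
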